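(* Let $p,q$ be integers with $1+|p|<|q|$ and let $t(x)=x^2+px-q$. Then every polynomial $f\in\mathbb{Z}[x]$ is equivalent modulo $t$ to a reduced polynomial, i.e. there is $\widetilde f(x)=\sum_{i=0}^m b_ix^i\in\mathbb{Z}[x]$ with $|b_i|<|q|$ for all $i$ such that $t$ divides $f-\widetilde f$.
   Context: A polynomial $\sum_i a_ix^i\in\mathbb{Z}[x]$ is called reduced (with respect to $q$) if $|a_i|<|q|$ for all $i$. *)

theory Defs
  imports "HOL-Computational_Algebra.Polynomial"
begin

definition reduced :: "int \<Rightarrow> int poly \<Rightarrow> bool" where
  "reduced q f \<longleftrightarrow> (\<forall>i. \<bar>coeff f i\<bar> < \<bar>q\<bar>)"

end

(*
  Measure a polynomial by the sum of the absolute values of its coefficients. If some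
  coefficient a_i of g satisfies |a_i| >= |t_0|, adding +-x^i t with the sign that
  cancels against a_i lowers that coefficient by |t_0| in absolute value and raises the
  others by at most ||t|| - |t_0| in total. For t = x^2 + px - q this is a net decrease
  of |q| - |p| - 1 > 0, so iterating terminates at a reduced polynomial congruent to g.
*)
theory Submission
  imports Defs
begin

definition poly_l1_norm :: "'a::linordered_idom poly \<Rightarrow> 'a" where
  "poly_l1_norm f = (\<Sum>i\<le>degree f. \<bar>coeff f i\<bar>)"

lemma poly_l1_norm_conv_sum:
  assumes "degree f < n"
  shows "poly_l1_norm f = (\<Sum>i<n. \<bar>coeff f i\<bar>)"
  unfolding poly_l1_norm_def
  by (rule sum.mono_neutral_left) (use assms in \<open>auto simp: coeff_eq_0\<close>)

lemma abs_coeff_le_poly_l1_norm: "\<bar>coeff f i\<bar> \<le> poly_l1_norm f"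
proof -
  have "\<bar>coeff f i\<bar> \<le> (\<Sum>j<Suc (degree f + i). \<bar>coeff f j\<bar>)"
    by (rule member_le_sum) auto
  then show ?thesis
    by (simp add: poly_l1_norm_conv_sum[of f "Suc (degree f + i)"])
qed

lemma poly_l1_norm_add_le:
  "poly_l1_norm (f + g)
     \<le> poly_l1_norm f + poly_l1_norm g - (\<bar>coeff f i\<bar> + \<bar>coeff g i\<bar> - \<bar>coeff (f + g) i\<bar>)"
proof -
  define n where "n = Suc (degree f + degree g + i)"
  have "degree (f + g) < n"
    using degree_add_le_max[of f g] by (simp add: n_def)
  define d where "d j = (if j = i then \<bar>coeff f i\<bar> + \<bar>coeff g i\<bar> - \<bar>coeff (f + g) i\<bar> else 0)" for j
  have "(\<Sum>j<n. \<bar>coeff (f + g) j\<bar>) \<le> (\<Sum>j<n. \<bar>coeff f j\<bar> + \<bar>coeff g j\<bar> - d j)"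
    by (rule sum_mono) (auto simp: d_def abs_triangle_ineq)
  also have "\<dots> = (\<Sum>j<n. \<bar>coeff f j\<bar>) + (\<Sum>j<n. \<bar>coeff g j\<bar>) - d i"
    by (simp add: sum_subtractf sum.distrib d_def n_def)
  finally show ?thesis
    using \<open>degree (f + g) < n\<close>
    by (simp add: poly_l1_norm_conv_sum[of _ n] n_def d_def)
qed

lemma poly_l1_norm_monom_mult: "poly_l1_norm (monom c i * f) = \<bar>c\<bar> * poly_l1_norm f"
proof -
  define n where "n = Suc (degree f)"
  have "degree (monom c i * f) < n + i"
    using degree_mult_le[of "monom c i" f] degree_monom_le[of c i] by (simp add: n_def)
  then have "poly_l1_norm (monom c i * f) = (\<Sum>j<n + i. \<bar>coeff (monom c i * f) j\<bar>)"
    by (rule poly_l1_norm_conv_sum)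
  also have "\<dots> = (\<Sum>j\<in>{i..<n + i}. \<bar>c * coeff f (j - i)\<bar>)"
    by (rule sum.mono_neutral_cong_right) (auto simp: coeff_monom_mult)
  also have "\<dots> = (\<Sum>j<n. \<bar>c\<bar> * \<bar>coeff f j\<bar>)"
    using sum.shift_bounds_nat_ivl[of "\<lambda>j. \<bar>c * coeff f (j - i)\<bar>" 0 i n]
    by (simp add: abs_mult atLeast0LessThan)
  also have "\<dots> = \<bar>c\<bar> * poly_l1_norm f"
    using poly_l1_norm_conv_sum[of f n] by (simp add: n_def sum_distrib_left distrib_left)
  finally show ?thesis .
qed

lemma ex_add_mult_poly_l1_norm_le:
  assumes "\<bar>coeff t 0\<bar> \<le> \<bar>coeff g i\<bar>"
  shows "\<exists>u. poly_l1_norm (g + u * t) \<le> poly_l1_norm g + poly_l1_norm t - 2 * \<bar>coeff t 0\<bar>"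
proof
  define s where "s = - sgn (coeff g i) * sgn (coeff t 0)"
  have s: "\<bar>s\<bar> \<le> 1"
    by (simp add: s_def abs_mult abs_sgn_eq)
  have cancel: "\<bar>coeff g i + s * coeff t 0\<bar> = \<bar>coeff g i\<bar> - \<bar>coeff t 0\<bar>"
    using assms
    by (cases "coeff g i" "0::'a" rule: linorder_cases;
        cases "coeff t 0" "0::'a" rule: linorder_cases) (auto simp: s_def)
  have "poly_l1_norm (g + monom s i * t)
      \<le> poly_l1_norm g + \<bar>s\<bar> * poly_l1_norm t - (\<bar>s\<bar> * \<bar>coeff t 0\<bar> + \<bar>coeff t 0\<bar>)"
    using poly_l1_norm_add_le[of g "monom s i * t" i]
    by (simp add: poly_l1_norm_monom_mult coeff_monom_mult cancel abs_mult)
  also have "\<dots> \<le> poly_l1_norm g + poly_l1_norm t - 2 * \<bar>coeff t 0\<bar>"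
    using mult_right_mono[OF s, of "poly_l1_norm t - \<bar>coeff t 0\<bar>"] abs_coeff_le_poly_l1_norm[of t 0]
    by (simp add: algebra_simps)
  finally show "poly_l1_norm (g + monom s i * t) \<le> poly_l1_norm g + poly_l1_norm t - 2 * \<bar>coeff t 0\<bar>" .
qed

lemma exists_reduced_mod_poly:
  fixes t g :: "int poly"
  assumes "poly_l1_norm t < 2 * \<bar>coeff t 0\<bar>"
  shows "\<exists>h. reduced (coeff t 0) h \<and> t dvd g - h"
proof (induction "nat (poly_l1_norm g)" arbitrary: g rule: less_induct)
  case less
  show ?case
  proof (cases "reduced (coeff t 0) g")
    case True
    then show ?thesis by auto
  next
    case False
    then obtain i where "\<bar>coeff t 0\<bar> \<le> \<bar>coeff g i\<bar>"
      by (auto simp: reduced_def not_less)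
    then obtain u where
      u: "poly_l1_norm (g + u * t) \<le> poly_l1_norm g + poly_l1_norm t - 2 * \<bar>coeff t 0\<bar>"
      using ex_add_mult_poly_l1_norm_le by blast
    have "nat (poly_l1_norm (g + u * t)) < nat (poly_l1_norm g)"
      using u assms abs_coeff_le_poly_l1_norm[of "g + u * t" 0] by linarith
    then obtain h where h: "reduced (coeff t 0) h" "t dvd g + u * t - h"
      using less.hyps by blast
    have "g - h = (g + u * t - h) - u * t" by simp
    with h(2) have "t dvd g - h" by (metis dvd_diff dvd_triv_right)
    with h(1) show ?thesis by blast
  qed
qed

theorem proposition1:
  fixes p q :: int and f :: "int poly"
  assumes "1 + \<bar>p\<bar> < \<bar>q\<bar>"
  shows "\<exists>g :: int poly. reduced q g \<and> [:-q, p, 1:] dvd (f - g)"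
proof -
  have "poly_l1_norm [:-q, p, 1:] = \<bar>q\<bar> + \<bar>p\<bar> + 1"
    by (simp add: poly_l1_norm_def numeral_2_eq_2)
  then have "poly_l1_norm [:-q, p, 1:] < 2 * \<bar>coeff [:-q, p, 1:] 0\<bar>"
    using assms by simp
  moreover have "reduced (-q) = reduced q"
    by (simp add: reduced_def fun_eq_iff)
  ultimately show ?thesis
    using exists_reduced_mod_poly[of "[:-q, p, 1:]" f] by simp
qed

end
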